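(* Let $0<\phi<\pi/6$, $T>0$, $F\in\mathcal A_\phi$, $j\in\{0,1,2,3\}$, $k\ge0$. For $\nu>2\rho_0+1$, for all $p\in\mathcal S_\phi$ and $0\le t\le T$, $$\Big|\int_0^t\big[(p^jF)*B_{j,k}*F^{*k}\big](p,\tau)\,e^{-p^3(t-\tau)}\,d\tau\Big|\le\frac{C(\phi)}{M_0(1+|p|^2)}\,\||B_{j,k}|*|F|\|_\nu\,\|F\|_\nu^k\,e^{\nu|p|}\,T^{(3-j)/3},$$ where the constant $C(\phi)$ is independent of $T$ but depends on $\phi$.
   Context: Let $\rho_0>0$; $b_{j,k}(y,t)$ is analytic in $y$ on $\{(y,t):\arg y\in(-2\pi/3,2\pi/3),|y|>\rho_0,0\le t\le T\}$ with $|y^{\alpha_j+k\beta}b_{j,k}|<A_b(T)$ ($\beta,\alpha_j>0$), and $B_{j,k}(p,t)=\frac1{2\pi i}\int_{\mathcal C}e^{py}b_{j,k}(y,t)dy$ with $\mathcal C=\{c+ire^{i\phi'\mathrm{sgn}(r)}:r\in\mathbb R\}$, $c$ large, $\phi<\phi'<\pi/6$. $\mathcal S_\phi=\{p:\arg p\in(-\phi,\phi),0<|p|<\infty\}$, $\mathcal K=\overline{\mathcal S_\phi}\times[0,T]$; $\|G\|_\nu=M_0\sup_{\mathcal K}(1+|p|^2)e^{-\nu|p|}|G(p,t)|$ (also for continuous functions on $\mathcal K$), $M_0=\sup_{s\ge0}\frac{2(1+s^2)(\ln(1+s^2)+s\arctan s)}{s(s^2+4)}$; $\mathcal A_\phi$: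 functions analytic in $p\in\mathcal S_\phi$, continuous on $\overline{\mathcal S_\phi}$ for each $t$, with finite norm. $(F*G)(p,t)=\int_0^pF(s,t)G(p-s,t)ds$ along $[0,p]$; $F^{*k}$ is the $k$-fold convolution power, with $X*F^{*0}=X$. For $p=|p|e^{i\theta}$, $(|B|*|F|)(p,t)=\int_0^{|p|}|B(se^{i\theta},t)||F(p-se^{i\theta},t)|ds$. *)

theory Defs
  imports "HOL-Complex_Analysis.Complex_Analysis"
begin

definition sector :: "real \<Rightarrow> complex set" where
  "sector \<phi> = {p. p \<noteq> 0 \<and> \<bar>Arg p\<bar> < \<phi>}"

definition b_domain :: "real \<Rightarrow> complex set" where
  "b_domain \<rho>0 = {y. \<bar>Arg y\<bar> < 2 * pi / 3 \<and> cmod y > \<rho>0}"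

text \<open>The constant M_0 (the integrand is 0 at s = 0, which is its limit there).\<close>
definition M0 :: real where
  "M0 = (SUP s\<in>{0::real..}. 2 * (1 + s^2) * (ln (1 + s^2) + s * arctan s) / (s * (s^2 + 4)))"

definition nu_norm :: "real \<Rightarrow> real \<Rightarrow> real \<Rightarrow> (complex \<Rightarrow> real \<Rightarrow> 'a::real_normed_vector) \<Rightarrow> ereal" where
  "nu_norm \<phi> T \<nu> G = ereal M0 *
     (SUP z\<in>closure (sector \<phi>) \<times> {0..T}.
        ereal ((1 + (cmod (fst z))^2) * exp (- \<nu> * cmod (fst z)) * norm (G (fst z) (snd z))))"

definition in_A :: "real \<Rightarrow> real \<Rightarrow> real \<Rightarrow> (complex \<Rightarrow> real \<Rightarrow> complex) \<Rightarrow> bool" where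
  "in_A \<phi> T \<nu> F \<longleftrightarrow>
     (\<forall>t\<in>{0..T}. (\<lambda>p. F p t) holomorphic_on sector \<phi> \<and>
                  continuous_on (closure (sector \<phi>)) (\<lambda>p. F p t)) \<and>
     nu_norm \<phi> T \<nu> F < \<infinity>"

definition conv :: "(complex \<Rightarrow> real \<Rightarrow> complex) \<Rightarrow> (complex \<Rightarrow> real \<Rightarrow> complex) \<Rightarrow> complex \<Rightarrow> real \<Rightarrow> complex" where
  "conv F G = (\<lambda>p t. contour_integral (linepath 0 p) (\<lambda>s. F s t * G (p - s) t))"

fun conv_pow :: "(complex \<Rightarrow> real \<Rightarrow> complex) \<Rightarrow> (complex \<Rightarrow> real \<Rightarrow> complex) \<Rightarrow> nat \<Rightarrow> complex \<Rightarrow> real \<Rightarrow> complex" where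
  "conv_pow X F 0 = X"
| "conv_pow X F (Suc k) = conv (conv_pow X F k) F"

definition abs_conv :: "(complex \<Rightarrow> real \<Rightarrow> complex) \<Rightarrow> (complex \<Rightarrow> real \<Rightarrow> complex) \<Rightarrow> complex \<Rightarrow> real \<Rightarrow> real" where
  "abs_conv B F = (\<lambda>p t. integral {0..cmod p}
      (\<lambda>s. cmod (B (of_real s * sgn p) t) * cmod (F (p - of_real s * sgn p) t)))"

definition contour_C :: "real \<Rightarrow> real \<Rightarrow> real \<Rightarrow> complex" where
  "contour_C c \<phi>' r = of_real c + \<i> * of_real r * exp (\<i> * of_real (\<phi>' * sgn r))"

definition Bfun :: "real \<Rightarrow> real \<Rightarrow> (complex \<Rightarrow> real \<Rightarrow> complex) \<Rightarrow> complex \<Rightarrow> real \<Rightarrow> complex" where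
  "Bfun c \<phi>' b p t = (1 / (2 * of_real pi * \<i>)) *
     integral UNIV (\<lambda>r. exp (p * contour_C c \<phi>' r) * b (contour_C c \<phi>' r) t
                          * (\<i> * exp (\<i> * of_real (\<phi>' * sgn r))))"

end

theory Submission
  imports Defs
begin

(* Along the ray through p, every function of finite nu-norm is bounded by
   S e^(nu x) / (1 + x^2). Convolving two such bounds costs exactly the factor M0,
   because the integral over t in [0,1] of x / ((1 + (t x)^2) (1 + ((1-t) x)^2))
   equals M0_fun x / (1 + x^2) <= M0 / (1 + x^2); iterating k times produces the
   k-th power of the norm of F. The first factor (p^j F) * B is bounded by
   |p|^j (|B| * |F|), which is legitimate because B has only an integrable
   singularity s^(-theta), theta < 1, at the origin: on C one has
   Re (p y) <= c |p| - sin(phi' - phi) |p| |r|, and the decay of b makes the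
   remaining integral over C converge. Finally Re p^3 >= cos(3 phi) |p|^3 on the
   sector, so the Duhamel kernel integrates to at most min(t, 1/(cos(3 phi) |p|^3)),
   and |p|^j min(t, |p|^-3) <= t^((3-j)/3). *)

section \<open>The constant M0 and the convolution kernel\<close>

definition M0_fun :: "real \<Rightarrow> real" where
  "M0_fun s = 2 * (1 + s^2) * (ln (1 + s^2) + s * arctan s) / (s * (s^2 + 4))"

lemma M0_fun_le_8:
  assumes s: "0 \<le> s"
  shows "M0_fun s \<le> 8"
proof (cases "s = 0")
  case True
  then show ?thesis by (simp add: M0_fun_def)
next
  case False
  with s have sp: "0 < s" by simp
  have "ln (1 + s^2) \<le> ln ((1 + s)^2)"
    using s by (intro ln_mono) (auto simp: power2_eq_square algebra_simps add_pos_nonneg)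
  also have "\<dots> = 2 * ln (1 + s)" using s by (simp add: ln_realpow)
  also have "\<dots> \<le> 2 * s" using ln_add_one_self_le_self[OF s] by simp
  finally have ln_le: "ln (1 + s^2) \<le> 2 * s" .
  have "arctan s \<le> 2" using arctan_ubound[of s] pi_less_4 by linarith
  with s have arctan_le: "s * arctan s \<le> 2 * s"
    using mult_left_mono[of "arctan s" 2 s] by linarith
  have "2 * (1 + s^2) * (ln (1 + s^2) + s * arctan s) \<le> 2 * (1 + s^2) * (4 * s)"
    using ln_le arctan_le by (intro mult_left_mono) auto
  also have "\<dots> \<le> 8 * (s * (s^2 + 4))" using sp by (simp add: algebra_simps power2_eq_square)
  finally show ?thesis
    using sp unfolding M0_fun_def by (simp add: pos_divide_le_eq add_pos_nonneg)
qed

lemma M0_fun_le_M0: "0 \<le> s \<Longrightarrow> M0_fun s \<le> M0"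
  unfolding M0_def M0_fun_def[symmetric]
  by (rule cSUP_upper) (auto intro!: bdd_aboveI[of _ 8] M0_fun_le_8)

lemma M0_pos: "0 < M0"
proof -
  have "0 < M0_fun 1" unfolding M0_fun_def by (simp add: add_pos_nonneg)
  then show ?thesis using M0_fun_le_M0[of 1] by simp
qed

lemma conv_kernel_partial_fractions:
  fixes x t :: real
  assumes x: "0 < x"
  defines "A \<equiv> 2 / (x * (x^2 + 4))" and "B \<equiv> 1 / (x^2 + 4)"
  shows "(A*t*x + B) * (1 + ((1-t)*x)^2) + (A*(1-t)*x + B) * (1 + (t*x)^2) = 1"
proof -
  have x4: "0 < x^2 + 4" by (simp add: add_nonneg_pos)
  have Ax: "A * x = 2 / (x^2 + 4)" unfolding A_def using x by simp
  have "A*t*x + B = t * (A*x) + B" "A*(1-t)*x + B = (1-t) * (A*x) + B"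
    by (simp_all add: ac_simps)
  then have "A*t*x + B = (2*t + 1) / (x^2 + 4)" "A*(1-t)*x + B = (3 - 2*t) / (x^2 + 4)"
    unfolding Ax B_def by (simp_all add: add_divide_distrib diff_divide_distrib)
  then have "(A*t*x + B) * (1 + ((1-t)*x)^2) + (A*(1-t)*x + B) * (1 + (t*x)^2)
      = ((2*t + 1) * (1 + ((1-t)*x)^2) + (3 - 2*t) * (1 + (t*x)^2)) / (x^2 + 4)"
    by (simp only: times_divide_eq_left add_divide_distrib[symmetric])
  also have "(2*t + 1) * (1 + ((1-t)*x)^2) + (3 - 2*t) * (1 + (t*x)^2) = x^2 + 4"
    by (simp add: algebra_simps power2_eq_square)
  finally show ?thesis using x4 by simp
qed

lemma has_integral_conv_kernel:
  fixes x :: real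
  assumes x: "0 < x"
  shows "((\<lambda>t. x / ((1 + (t*x)^2) * (1 + ((1-t)*x)^2))) has_integral M0_fun x / (1 + x^2)) {0..1}"
proof -
  define A where "A = 2 / (x * (x^2 + 4))"
  define B where "B = 1 / (x^2 + 4)"
  define \<Psi> where "\<Psi> t = A/2 * ln (1 + (t*x)^2) + B * arctan (t*x)
      - A/2 * ln (1 + ((1-t)*x)^2) - B * arctan ((1-t)*x)" for t
  have x4: "0 < x^2 + 4" by (simp add: add_nonneg_pos)
  have "(\<Psi> has_real_derivative x / ((1 + (t*x)^2) * (1 + ((1-t)*x)^2))) (at t within {0..1})" for t
  proof -
    define a where "a = 1 + (t*x)^2"
    define b where "b = 1 + ((1-t)*x)^2"
    have ab: "0 < a" "0 < b" unfolding a_def b_def by (auto intro: add_pos_nonneg)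
    have partial_fractions: "(A*t*x + B) * b + (A*(1-t)*x + B) * a = 1"
      using conv_kernel_partial_fractions[OF x, of t] unfolding a_def b_def A_def B_def .
    have "((\<lambda>t. ln (1 + (t*x)^2)) has_real_derivative 2*(t*x)*x/a) (at t within {0..1})"
      "((\<lambda>t. ln (1 + ((1-t)*x)^2)) has_real_derivative -(2*((1-t)*x)*x/b)) (at t within {0..1})"
      "((\<lambda>t. arctan (t*x)) has_real_derivative x/a) (at t within {0..1})"
      "((\<lambda>t. arctan ((1-t)*x)) has_real_derivative -(x/b)) (at t within {0..1})"
      unfolding a_def b_def
      by (auto intro!: derivative_eq_intros simp: add_pos_nonneg divide_inverse_commute)
    then have "(\<Psi> has_real_derivative
        A/2 * (2*(t*x)*x/a) + B * (x/a) - A/2 * (-(2*((1-t)*x)*x/b)) - B * (-(x/b))) (at t within {0..1})"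
      unfolding \<Psi>_def by (intro DERIV_diff DERIV_add DERIV_cmult)
    moreover have "A/2 * (2*(t*x)*x/a) + B * (x/a) - A/2 * (-(2*((1-t)*x)*x/b)) - B * (-(x/b))
        = x * ((A*t*x + B) * b + (A*(1-t)*x + B) * a) / (a*b)"
      using ab by (simp add: field_simps)
    ultimately have "(\<Psi> has_real_derivative x / (a*b)) (at t within {0..1})"
      by (simp add: partial_fractions)
    then show ?thesis unfolding a_def b_def .
  qed
  then have "((\<lambda>t. x / ((1 + (t*x)^2) * (1 + ((1-t)*x)^2))) has_integral \<Psi> 1 - \<Psi> 0) {0..1}"
    by (intro fundamental_theorem_of_calculus)
       (auto simp: has_real_derivative_iff_has_vector_derivative)
  moreover have "\<Psi> 1 - \<Psi> 0 = M0_fun x / (1 + x^2)"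
  proof -
    \<comment> \<open>Abstracted so that \<open>field_simps\<close> treats the logarithm and the arctangent as atoms.\<close>
    have collect: "2 / (x * D) * L + 2 * (1 / D) * R = 2 * E * (L + x * R) / (x * D) / E"
      if "0 < D" "0 < E" for D E L R :: real
      using x that by (simp add: field_simps)
    have "\<Psi> 1 - \<Psi> 0 = 2 / (x * (x^2 + 4)) * ln (1 + x^2) + 2 * (1 / (x^2 + 4)) * arctan x"
      unfolding \<Psi>_def A_def B_def by simp
    also have "\<dots> = M0_fun x / (1 + x^2)"
      unfolding M0_fun_def by (rule collect) (use x4 in \<open>auto simp: add_pos_nonneg\<close>)
    finally show ?thesis .
  qed
  ultimately show ?thesis by simp
qed

section \<open>Weighted bounds for convolutions along a ray\<close>

lemma norm_integral_le_of_has_integral: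
  fixes f :: "real \<Rightarrow> 'a::euclidean_space"
  assumes g: "(g has_integral I) S" and le: "\<And>x. x \<in> S \<Longrightarrow> norm (f x) \<le> g x"
  shows "norm (integral S f) \<le> I"
proof (cases "f integrable_on S")
  case True
  then show ?thesis
    using g le integral_norm_bound_integral[of f S g] by (auto simp: integral_unique)
next
  case False
  have "0 \<le> I" using g le by (intro has_integral_nonneg[OF g]) (meson norm_ge_zero order_trans)
  with False show ?thesis by (simp add: not_integrable_integral)
qed

lemma conv_eq_integral:
  "conv X F q \<tau> = integral {0..1} (\<lambda>t. X (of_real t * q) \<tau> * F (q - of_real t * q) \<tau> * q)"
  unfolding conv_def contour_integral_integral vector_derivative_linepath_at
  by (simp add: linepath_def scaleR_conv_of_real)

lemma conv_eq_0_if_vanishes: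
  assumes "\<And>s. s \<in> {0..1} \<Longrightarrow> F (of_real s * q) \<tau> = 0"
  shows "conv X F q \<tau> = 0"
proof -
  have vanish: "F (q - of_real t * q) \<tau> = 0" if "t \<in> {0..1}" for t
    using assms[of "1 - t"] that by (simp add: algebra_simps)
  have "integral {0..1} (\<lambda>t. X (of_real t * q) \<tau> * F (q - of_real t * q) \<tau> * q)
      = integral {0..1} (\<lambda>_::real. 0)"
    by (rule Henstock_Kurzweil_Integration.integral_cong) (simp add: vanish)
  then show ?thesis unfolding conv_eq_integral by simp
qed

definition exp_weight :: "real \<Rightarrow> real \<Rightarrow> real" where
  "exp_weight \<nu> x = exp (\<nu> * x) / (1 + x^2)"

lemma exp_weight_pos: "0 < exp_weight \<nu> x"
  unfolding exp_weight_def by (simp add: add_pos_nonneg)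

lemma le_exp_weight_iff: "n \<le> S * exp_weight \<nu> x \<longleftrightarrow> (1 + x^2) * exp (- \<nu> * x) * n \<le> S"
proof -
  have "0 < 1 + x^2" by (simp add: add_pos_nonneg)
  then show ?thesis
    unfolding exp_weight_def by (simp add: exp_minus field_simps)
qed

lemma exp_weight_le_exp:
  assumes "0 \<le> \<nu>" "0 \<le> y" "y \<le> x"
  shows "exp_weight \<nu> y \<le> exp (\<nu> * x)"
proof -
  have "exp_weight \<nu> y \<le> exp (\<nu> * y) / 1"
    unfolding exp_weight_def by (intro divide_left_mono) (auto simp: add_pos_nonneg)
  also have "\<dots> \<le> exp (\<nu> * x)" using assms by (simp add: mult_left_mono)
  finally show ?thesis .
qed

lemma norm_conv_ray_le:
  fixes X F :: "complex \<Rightarrow> real \<Rightarrow> complex"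
  assumes u: "norm u = 1" and K: "0 \<le> K" and S: "0 \<le> S" and x: "0 \<le> x"
    and X: "\<And>y. y \<in> {0..x} \<Longrightarrow> norm (X (of_real y * u) \<tau>) \<le> K * y^j * exp_weight \<nu> y"
    and F: "\<And>y. y \<in> {0..x} \<Longrightarrow> norm (F (of_real y * u) \<tau>) \<le> S * exp_weight \<nu> y"
  shows "norm (conv X F (of_real x * u) \<tau>) \<le> K * S * M0 * x^j * exp_weight \<nu> x"
proof (cases "x = 0")
  case True
  then show ?thesis using M0_pos K S exp_weight_pos[of \<nu> 0] by (simp add: conv_eq_integral)
next
  case False
  with x have xp: "0 < x" by simp
  define q where "q = of_real x * u"
  define W where "W = K * S * x^j * exp (\<nu> * x)"
  have W: "0 \<le> W" unfolding W_def using K S xp by simp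
  have "norm (X (of_real t * q) \<tau> * F (q - of_real t * q) \<tau> * q)
      \<le> W * (x / ((1 + (t*x)^2) * (1 + ((1-t)*x)^2)))" if t: "t \<in> {0..1}" for t
  proof -
    have tx: "t*x \<in> {0..x}" "(1-t)*x \<in> {0..x}"
      using t xp by (auto simp: mult_left_le_one_le)
    have "norm (X (of_real t * q) \<tau>) \<le> K * (t*x)^j * exp_weight \<nu> (t*x)"
      using X[OF tx(1)] unfolding q_def by (simp add: mult.assoc)
    also have "\<dots> \<le> K * x^j * exp_weight \<nu> (t*x)"
      using tx(1) K exp_weight_pos[of \<nu> "t*x"]
      by (intro mult_right_mono mult_left_mono power_mono) auto
    finally have Xt: "norm (X (of_real t * q) \<tau>) \<le> K * x^j * exp_weight \<nu> (t*x)" .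
    have Ft: "norm (F (q - of_real t * q) \<tau>) \<le> S * exp_weight \<nu> ((1-t)*x)"
      using F[OF tx(2)] unfolding q_def by (simp add: algebra_simps)
    have "norm (X (of_real t * q) \<tau> * F (q - of_real t * q) \<tau> * q)
        = norm (X (of_real t * q) \<tau>) * norm (F (q - of_real t * q) \<tau>) * x"
      using xp u unfolding q_def by (simp add: norm_mult)
    also have "\<dots> \<le> (K * x^j * exp_weight \<nu> (t*x)) * (S * exp_weight \<nu> ((1-t)*x)) * x"
      using Xt Ft xp by (intro mult_right_mono mult_mono) (auto intro: order_trans[OF norm_ge_zero])
    also have "\<dots> = W * (x / ((1 + (t*x)^2) * (1 + ((1-t)*x)^2)))"
    proof -
      have "exp (\<nu> * (t*x)) * exp (\<nu> * ((1-t)*x)) = exp (\<nu> * x)"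
        by (simp add: exp_add[symmetric] algebra_simps)
      then show ?thesis unfolding W_def exp_weight_def by (simp add: field_simps)
    qed
    finally show ?thesis .
  qed
  then have "norm (conv X F q \<tau>) \<le> W * (M0_fun x / (1 + x^2))"
    unfolding conv_eq_integral
    by (intro norm_integral_le_of_has_integral[OF has_integral_mult_right[OF has_integral_conv_kernel[OF xp]]])
  also have "\<dots> \<le> W * (M0 / (1 + x^2))"
    using M0_fun_le_M0[of x] xp W by (intro mult_left_mono divide_right_mono) (auto simp: add_pos_nonneg)
  also have "\<dots> = K * S * M0 * x^j * exp_weight \<nu> x" unfolding W_def exp_weight_def by simp
  finally show ?thesis unfolding q_def .
qed

lemma norm_conv_pow_ray_le:
  fixes X F :: "complex \<Rightarrow> real \<Rightarrow> complex"
  assumes u: "norm u = 1" and K: "0 \<le> K" and S: "0 \<le> S"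
    and X: "\<And>y. y \<in> {0..P} \<Longrightarrow> norm (X (of_real y * u) \<tau>) \<le> K * y^j * exp_weight \<nu> y"
    and F: "\<And>y. y \<in> {0..P} \<Longrightarrow> norm (F (of_real y * u) \<tau>) \<le> S * exp_weight \<nu> y"
    and x: "x \<in> {0..P}"
  shows "norm (conv_pow X F m (of_real x * u) \<tau>) \<le> K * (S * M0)^m * x^j * exp_weight \<nu> x"
  using x
proof (induction m arbitrary: x)
  case 0
  then show ?case using X by simp
next
  case (Suc m)
  have "norm (conv (conv_pow X F m) F (of_real x * u) \<tau>)
      \<le> (K * (S * M0)^m) * S * M0 * x^j * exp_weight \<nu> x"
    using Suc.prems Suc.IH F K S M0_pos by (intro norm_conv_ray_le[OF u]) auto
  then show ?case by (simp add: ac_simps)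
qed

section \<open>The Duhamel time integral\<close>

lemma Re_power3_ge:
  assumes p: "p \<in> sector \<phi>" and \<phi>: "\<phi> \<le> pi/3"
  shows "cos (3*\<phi>) * cmod p ^ 3 \<le> Re (p^3)"
proof -
  have a: "\<bar>Arg p\<bar> < \<phi>" using p unfolding sector_def by auto
  have "p^3 = rcis (cmod p ^ 3) (3 * Arg p)"
    using DeMoivre2[of "cmod p" "Arg p" 3] by (simp add: rcis_cmod_Arg)
  then have "Re (p^3) = cmod p ^ 3 * cos \<bar>3 * Arg p\<bar>" by simp
  moreover have "cos (3*\<phi>) \<le> cos \<bar>3 * Arg p\<bar>"
    using a \<phi> by (subst cos_mono_le_eq) auto
  ultimately show ?thesis by (simp add: mult.commute mult_left_mono)
qed

lemma has_integral_exp_decay: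
  fixes R t :: real
  assumes R: "0 < R" and t: "0 \<le> t"
  shows "((\<lambda>\<tau>. exp (-R * (t - \<tau>))) has_integral (1 - exp (-R * t)) / R) {0..t}"
proof -
  have "((\<lambda>\<tau>. exp (-R * (t - \<tau>)) / R) has_real_derivative exp (-R * (t - \<tau>))) (at \<tau> within {0..t})"
    for \<tau>
    using R by (auto intro!: derivative_eq_intros)
  then have "((\<lambda>\<tau>. exp (-R * (t - \<tau>))) has_integral exp (-R * (t - t)) / R - exp (-R * (t - 0)) / R) {0..t}"
    using t by (intro fundamental_theorem_of_calculus)
      (auto simp: has_real_derivative_iff_has_vector_derivative)
  then show ?thesis by (simp add: diff_divide_distrib)
qed

lemma min_le_powr_mult_powr:
  fixes a b \<theta> :: real
  assumes "0 \<le> a" "0 \<le> b" "0 \<le> \<theta>" "\<theta> \<le> 1"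
  shows "min a b \<le> a powr (1 - \<theta>) * b powr \<theta>"
proof -
  have "min a b = min a b powr (1 - \<theta>) * min a b powr \<theta>"
    using assms by (cases "min a b = 0") (simp_all add: powr_add[symmetric])
  also have "\<dots> \<le> a powr (1 - \<theta>) * b powr \<theta>"
    using assms by (intro mult_mono powr_mono2) auto
  finally show ?thesis .
qed

lemma power_mult_min_le_powr:
  fixes P t :: real
  assumes P: "0 < P" and t: "0 \<le> t" and j: "j \<le> 3"
  shows "P^j * min t (1 / P^3) \<le> t powr ((3 - real j) / 3)"
proof -
  have "min t (1 / P^3) \<le> t powr (1 - real j / 3) * (1 / P^3) powr (real j / 3)"
    using P t j by (intro min_le_powr_mult_powr) auto
  also have "(1 / P^3) powr (real j / 3) = 1 / P^j"
    using P by (simp add: powr_divide powr_powr powr_realpow[symmetric] flip: powr_numeral)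
  also have "1 - real j / 3 = (3 - real j) / 3" by (simp add: field_simps)
  finally show ?thesis using P by (simp add: field_simps)
qed

lemma norm_Duhamel_integral_le:
  fixes X :: "real \<Rightarrow> complex"
  assumes p: "p \<in> sector \<phi>" and \<phi>: "\<phi> < pi/6" and t: "t \<in> {0..T}" and j: "j \<le> 3"
    and W: "0 \<le> W" and X: "\<And>\<tau>. \<tau> \<in> {0..t} \<Longrightarrow> norm (X \<tau>) \<le> W * cmod p ^ j"
  shows "norm (integral {0..t} (\<lambda>\<tau>. X \<tau> * exp (-(p^3) * of_real (t - \<tau>))))
           \<le> W / cos (3*\<phi>) * T powr ((3 - real j) / 3)"
proof -
  define P R \<kappa> where "P = cmod p" and "R = Re (p^3)" and "\<kappa> = cos (3*\<phi>)"
  have P: "0 < P" using p unfolding sector_def P_def by auto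
  have "0 < \<phi>" using p unfolding sector_def by auto
  then have \<kappa>: "0 < \<kappa>" "\<kappa> \<le> 1" unfolding \<kappa>_def using \<phi> by (auto intro!: cos_gt_zero_pi)
  have RP: "\<kappa> * P^3 \<le> R" unfolding \<kappa>_def P_def R_def using \<phi> \<open>0 < \<phi>\<close> by (intro Re_power3_ge[OF p]) linarith
  then have R: "0 < R" using \<kappa> P by (smt (verit) mult_pos_pos zero_less_power)
  have t0: "0 \<le> t" "t \<le> T" using t by auto
  have "norm (X \<tau> * exp (-(p^3) * of_real (t - \<tau>))) \<le> W * P^j * exp (-R * (t - \<tau>))"
    if "\<tau> \<in> {0..t}" for \<tau>
    using X[OF that] unfolding P_def R_def
    by (simp add: norm_mult norm_exp_eq_Re mult_right_mono)
  then have "norm (integral {0..t} (\<lambda>\<tau>. X \<tau> * exp (-(p^3) * of_real (t - \<tau>))))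
      \<le> W * P^j * ((1 - exp (-R * t)) / R)"
    by (intro norm_integral_le_of_has_integral[OF has_integral_mult_right[OF has_integral_exp_decay[OF R t0(1)]]])
  also have "(1 - exp (-R * t)) / R \<le> min t (1 / R)"
    using R exp_ge_add_one_self[of "-R * t"] by (simp add: field_simps)
  also have "\<dots> \<le> min t (1 / (\<kappa> * P^3))"
    using RP R \<kappa> P by (intro min.mono divide_left_mono) auto
  also have "\<dots> \<le> min (t / \<kappa>) (1 / P^3 / \<kappa>)"
    using \<kappa> t0 by (intro min.mono) (auto simp: le_divide_eq mult_left_le)
  also have "\<dots> = min t (1 / P^3) / \<kappa>"
    using \<kappa> by (simp add: min_divide_distrib_right)
  also have "W * P^j * (min t (1 / P^3) / \<kappa>) = W / \<kappa> * (P^j * min t (1 / P^3))"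
    by simp
  also have "\<dots> \<le> W / \<kappa> * t powr ((3 - real j) / 3)"
    using W \<kappa> by (intro mult_left_mono power_mult_min_le_powr P t0 j) auto
  also have "\<dots> \<le> W / \<kappa> * T powr ((3 - real j) / 3)"
    using W \<kappa> t0 j by (intro mult_left_mono powr_mono2) auto
  finally show ?thesis
    using W P \<kappa> by (simp add: \<kappa>_def mult_left_mono)
qed

section \<open>The singularity of B at the origin\<close>

lemma contour_C_eq: "contour_C c \<phi>' r = Complex (c - \<bar>r\<bar> * sin \<phi>') (r * cos \<phi>')"
  unfolding contour_C_def cis_conv_exp[symmetric]
  by (cases "r > 0"; cases "r < 0") (auto simp: complex_eq_iff sgn_if)

lemma norm_contour_C_ge: "c * cos \<phi>' \<le> cmod (contour_C c \<phi>' r)"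
proof -
  have "(c - \<bar>r\<bar> * sin \<phi>')^2 + (r * cos \<phi>')^2 = (c * cos \<phi>')^2 + (\<bar>r\<bar> - c * sin \<phi>')^2"
    by (simp add: power2_diff power_mult_distrib sin_squared_eq algebra_simps)
  then have "(c * cos \<phi>')^2 \<le> (c - \<bar>r\<bar> * sin \<phi>')^2 + (r * cos \<phi>')^2" by simp
  then show ?thesis unfolding contour_C_eq complex_norm by (rule real_le_rsqrt)
qed

lemma abs_mult_cos_le_norm_contour_C: "\<bar>r\<bar> * cos \<phi>' \<le> cmod (contour_C c \<phi>' r)"
proof -
  have "\<bar>r\<bar> * cos \<phi>' \<le> \<bar>Im (contour_C c \<phi>' r)\<bar>"
    unfolding contour_C_eq by (simp add: abs_mult mult_left_mono)
  then show ?thesis using abs_Im_le_cmod order_trans by blast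
qed

lemma abs_Arg_less_2pi_3:
  assumes "z \<noteq> 0" and "- cmod z < 2 * Re z"
  shows "\<bar>Arg z\<bar> < 2*pi/3"
proof (rule ccontr)
  assume "\<not> \<bar>Arg z\<bar> < 2*pi/3"
  then have "cos \<bar>Arg z\<bar> \<le> cos (2*pi/3)"
    using Arg_bounded[of z] by (subst cos_mono_le_eq) auto
  moreover have "-1/2 < cos (Arg z)"
    using assms by (simp add: cos_Arg field_simps)
  ultimately show False by (simp add: cos_120)
qed

lemma neg_norm_contour_C_less_2_Re:
  assumes c: "0 < c" and \<phi>': "0 \<le> \<phi>'" "\<phi>' < pi/6"
  shows "- cmod (contour_C c \<phi>' r) < 2 * Re (contour_C c \<phi>' r)"
proof (cases "0 \<le> Re (contour_C c \<phi>' r)")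
  case True
  have "0 < cos \<phi>'" using \<phi>' by (intro cos_gt_zero_pi) auto
  with c have "0 < cmod (contour_C c \<phi>' r)"
    using norm_contour_C_ge[of c \<phi>' r] by (smt (verit) mult_pos_pos)
  with True show ?thesis by linarith
next
  case False
  define S C where "S = sin \<phi>'" and "C = cos \<phi>'"
  define w where "w = \<bar>r\<bar> * S - c"
  have ReY: "Re (contour_C c \<phi>' r) = - w" "Im (contour_C c \<phi>' r) = r * C"
    unfolding contour_C_eq w_def S_def C_def by simp_all
  have w: "0 < w" "w < \<bar>r\<bar> * S" using False c unfolding ReY w_def by auto
  have "0 \<le> S" unfolding S_def using \<phi>' by (intro sin_ge_zero) auto
  moreover have "S < 1/2"
    using \<phi>' sin_mono_less_eq[of \<phi>' "pi/6"] unfolding S_def by (simp add: sin_30)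
  ultimately have "S^2 < (1/2)^2" by (intro power_strict_mono) auto
  then have "3 * S^2 < C^2"
    unfolding S_def C_def cos_squared_eq by (simp add: power_divide)
  have "3 * w^2 < 3 * (r^2 * S^2)"
    using w power_strict_mono[of w "\<bar>r\<bar> * S" 2] by (simp add: power_mult_distrib)
  also have "\<dots> \<le> r^2 * C^2"
    using mult_left_mono[OF less_imp_le[OF \<open>3 * S^2 < C^2\<close>], of "r^2"] by (simp add: ac_simps)
  finally have "(2 * w)^2 < w^2 + (r * C)^2" by (simp add: power_mult_distrib)
  then have "2 * w < sqrt (w^2 + (r * C)^2)" by (rule real_less_rsqrt)
  then show ?thesis unfolding cmod_def ReY by simp
qed

lemma contour_C_in_b_domain:
  assumes \<rho>0: "0 < \<rho>0" and \<phi>': "0 < \<phi>'" "\<phi>' < pi/6" and c: "\<rho>0 < c * cos \<phi>'"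
  shows "contour_C c \<phi>' r \<in> b_domain \<rho>0"
proof -
  have "0 < cos \<phi>'" using \<phi>' by (intro cos_gt_zero_pi) auto
  with \<rho>0 c have "0 < c" by (smt (verit) mult_nonpos_nonneg)
  have "\<rho>0 < cmod (contour_C c \<phi>' r)" using c norm_contour_C_ge[of c \<phi>' r] by linarith
  moreover have "\<bar>Arg (contour_C c \<phi>' r)\<bar> < 2*pi/3"
    using calculation \<rho>0 \<phi>' neg_norm_contour_C_less_2_Re[OF \<open>0 < c\<close>]
    by (intro abs_Arg_less_2pi_3) auto
  ultimately show ?thesis unfolding b_domain_def by simp
qed

lemma Re_mult_contour_C_le:
  assumes u: "norm u = 1" "\<bar>Arg u\<bar> < \<phi>" and \<phi>: "\<phi> < \<phi>'" "\<phi>' < pi/6" and c: "0 < c"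
  shows "Re (u * contour_C c \<phi>' r) \<le> c - sin (\<phi>' - \<phi>) * \<bar>r\<bar>"
proof -
  define a where "a = Arg u"
  have ua: "u = cis a" using rcis_cmod_Arg[of u] u unfolding a_def by (simp add: rcis_def)
  have a: "-\<phi> < a" "a < \<phi>" using u unfolding a_def by auto
  have ca: "c * cos a \<le> c" using c by (simp add: mult_left_le_one_le)
  have ReE: "Re (u * contour_C c \<phi>' r) = c * cos a - \<bar>r\<bar> * sin \<phi>' * cos a - r * cos \<phi>' * sin a"
    unfolding ua contour_C_eq by (simp add: algebra_simps)
  show ?thesis
  proof (cases "0 \<le> r")
    case True
    have "sin (\<phi>' - \<phi>) \<le> sin (\<phi>' + a)" using a \<phi> by (subst sin_mono_le_eq) auto
    then have "r * sin (\<phi>' - \<phi>) \<le> r * sin (\<phi>' + a)" using True by (rule mult_left_mono)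
    moreover have "Re (u * contour_C c \<phi>' r) = c * cos a - r * sin (\<phi>' + a)"
      unfolding ReE sin_add using True by (simp add: algebra_simps)
    ultimately show ?thesis using ca True by (simp add: mult.commute)
  next
    case False
    have "sin (\<phi>' - \<phi>) \<le> sin (\<phi>' - a)" using a \<phi> by (subst sin_mono_le_eq) auto
    then have "r * sin (\<phi>' - a) \<le> r * sin (\<phi>' - \<phi>)" using False by (intro mult_left_mono_neg) auto
    moreover have "Re (u * contour_C c \<phi>' r) = c * cos a + r * sin (\<phi>' - a)"
      unfolding ReE sin_diff using False by (simp add: algebra_simps)
    moreover have "sin (\<phi>' - \<phi>) * \<bar>r\<bar> = - (r * sin (\<phi>' - \<phi>))" using False by simp
    ultimately show ?thesis using ca by linarith
  qed
qed

lemma has_integral_powr_decay: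
  fixes \<rho> :: real
  assumes \<rho>: "1 < \<rho>"
  shows "((\<lambda>x. (1 + x) powr (-\<rho>)) has_integral 1 / (\<rho> - 1)) {0..}"
proof (rule has_integral_to_inf)
  define F where "F x = (1 + x) powr (1 - \<rho>) / (1 - \<rho>)" for x :: real
  have int: "((\<lambda>x. (1 + x) powr (-\<rho>)) has_integral F y - F 0) {0..y}" if "0 \<le> y" for y
  proof (rule fundamental_theorem_of_calculus[OF that])
    fix x assume "x \<in> {0..y}"
    then have "(F has_real_derivative (1 - \<rho>) * (1 + x) powr (1 - \<rho> - 1) * 1 / (1 - \<rho>)) (at x within {0..y})"
      unfolding F_def by (auto intro!: derivative_eq_intros)
    then show "(F has_vector_derivative (1 + x) powr (-\<rho>)) (at x within {0..y})"
      using \<rho> by (simp add: has_real_derivative_iff_has_vector_derivative)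
  qed
  show "(\<lambda>x. (1 + x) powr (-\<rho>)) integrable_on {0..y}" for y
  proof (cases "0 \<le> y")
    case True
    then show ?thesis using int by blast
  qed (simp add: integrable_on_empty)
  have "((\<lambda>y. (1 + y) powr (1 - \<rho>)) \<longlongrightarrow> 0) at_top"
    using \<rho> by (intro tendsto_neg_powr filterlim_tendsto_add_at_top[OF tendsto_const filterlim_ident]) auto
  then have "((\<lambda>y. F y - F 0) \<longlongrightarrow> 0 / (1 - \<rho>) - F 0) at_top"
    unfolding F_def using \<rho> by (intro tendsto_intros) auto
  moreover have "\<forall>\<^sub>F y in at_top. integral {0..y} (\<lambda>x. (1 + x) powr (-\<rho>)) = F y - F 0"
    by (intro eventually_at_top_linorderI[of 0]) (use int integral_unique in blast)
  moreover have "0 / (1 - \<rho>) - F 0 = 1 / (\<rho> - 1)" unfolding F_def using \<rho> by (simp add: divide_simps)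
  ultimately show "((\<lambda>y. integral {0..y} (\<lambda>x. (1 + x) powr (-\<rho>))) \<longlongrightarrow> 1 / (\<rho> - 1)) at_top"
    by (simp add: tendsto_cong)
qed simp

lemma integrable_powr_decay:
  fixes \<rho> :: real
  assumes \<rho>: "1 < \<rho>"
  shows "(\<lambda>x. (1 + \<bar>x\<bar>) powr (-\<rho>)) integrable_on UNIV"
proof -
  define g where "g x = (if x \<in> {0..} then (1 + x) powr (-\<rho>) else 0)" for x :: real
  have "(g has_integral 1 / (\<rho> - 1)) UNIV"
    unfolding g_def has_integral_restrict_UNIV by (rule has_integral_powr_decay[OF \<rho>])
  then have g: "g integrable_on UNIV" by blast
  then have "g absolutely_integrable_on UNIV"
    by (intro nonnegative_absolutely_integrable_1) (auto simp: g_def)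
  then have "integrable lebesgue g" by (simp add: set_integrable_def)
  then have "integrable lebesgue (\<lambda>x. g (0 + (-1) * x))"
    by (subst lebesgue_integrable_real_affine_iff) auto
  then have "(\<lambda>x. g (-x)) integrable_on UNIV"
    using has_integral_integral_lebesgue by (auto simp: integrable_on_def)
  with g have "(\<lambda>x. g x + g (-x)) integrable_on UNIV" by (rule integrable_add)
  then show ?thesis
    by (rule integrable_spike[where S = "{0}"]) (auto simp: g_def)
qed

lemma exp_neg_le_powr:
  fixes y \<theta> :: real
  assumes y: "0 \<le> y" and \<theta>: "0 \<le> \<theta>" "\<theta> \<le> 1"
  shows "exp (-y) \<le> (1 + y) powr (-\<theta>)"
proof -
  have "(1 + y) powr \<theta> \<le> (1 + y) powr 1" using y \<theta> by (intro powr_mono) auto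
  also have "\<dots> \<le> exp y" using y by simp
  finally show ?thesis using y by (simp add: exp_minus powr_minus field_simps)
qed

lemma norm_b_contour_C_le:
  assumes \<rho>0: "0 < \<rho>0" and \<phi>': "0 < \<phi>'" "\<phi>' < pi/6" and c: "\<rho>0 < c * cos \<phi>'" and \<gamma>: "0 < \<gamma>"
    and b: "\<forall>y\<in>b_domain \<rho>0. cmod y powr \<gamma> * cmod (b y \<tau>) < A"
  obtains A' where "0 \<le> A'" "\<And>r. cmod (b (contour_C c \<phi>' r) \<tau>) \<le> A' * (1 + \<bar>r\<bar>) powr (- min \<gamma> 1)"
proof
  define \<gamma>' where "\<gamma>' = min \<gamma> 1"
  have \<gamma>': "0 < \<gamma>'" "\<gamma>' \<le> \<gamma>" unfolding \<gamma>'_def using \<gamma> by auto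
  define C where "C = cos \<phi>'"
  have C: "0 < C" unfolding C_def using \<phi>' by (intro cos_gt_zero_pi) auto
  with \<rho>0 c have "0 < c * C" unfolding C_def by linarith
  define m where "m = min (c * C) C / 2"
  have m: "0 < m" unfolding m_def using \<open>0 < c * C\<close> C by auto
  have "contour_C c \<phi>' 0 \<in> b_domain \<rho>0" using contour_C_in_b_domain \<rho>0 \<phi>' c by blast
  with b have "cmod (contour_C c \<phi>' 0) powr \<gamma> * cmod (b (contour_C c \<phi>' 0) \<tau>) < A" by blast
  then have "0 < A" by (rule le_less_trans[rotated]) simp
  define A' where "A' = A / (m powr \<gamma>' * \<rho>0 powr (\<gamma> - \<gamma>'))"
  show "0 \<le> A'" unfolding A'_def using \<open>0 < A\<close> by simp
  fix r
  define Y where "Y = contour_C c \<phi>' r"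
  have Y: "Y \<in> b_domain \<rho>0" unfolding Y_def using contour_C_in_b_domain \<rho>0 \<phi>' c by blast
  then have "\<rho>0 < cmod Y" unfolding b_domain_def by auto
  have "m * (1 + \<bar>r\<bar>) \<le> cmod Y"
    using norm_contour_C_ge[of c \<phi>' r] abs_mult_cos_le_norm_contour_C[of r \<phi>' c]
      mult_right_mono[of m "C/2" "\<bar>r\<bar>"]
    unfolding Y_def C_def[symmetric] m_def by (simp add: algebra_simps)
  define L where "L = (m * (1 + \<bar>r\<bar>)) powr \<gamma>' * \<rho>0 powr (\<gamma> - \<gamma>')"
  have L: "0 < L" unfolding L_def using m \<rho>0 by (simp add: add_pos_nonneg)
  have "L \<le> cmod Y powr \<gamma>' * cmod Y powr (\<gamma> - \<gamma>')"
    unfolding L_def using \<open>m * (1 + \<bar>r\<bar>) \<le> cmod Y\<close> \<open>\<rho>0 < cmod Y\<close> m \<rho>0 \<gamma>'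
    by (intro mult_mono powr_mono2) auto
  also have "\<dots> = cmod Y powr \<gamma>" by (simp add: powr_add[symmetric])
  finally have "L * cmod (b Y \<tau>) \<le> cmod Y powr \<gamma> * cmod (b Y \<tau>)" by (rule mult_right_mono) simp
  also have "\<dots> < A" using b Y by blast
  finally have "L * cmod (b Y \<tau>) < A" .
  then have "cmod (b Y \<tau>) \<le> A / L" using L by (simp add: field_simps)
  also have "A / L = A' * (1 + \<bar>r\<bar>) powr (-\<gamma>')"
  proof -
    have "(m * (1 + \<bar>r\<bar>)) powr \<gamma>' = m powr \<gamma>' * (1 + \<bar>r\<bar>) powr \<gamma>'"
      using m by (simp add: powr_mult)
    then show ?thesis unfolding L_def A'_def using m \<rho>0 by (simp add: powr_minus_divide field_simps)
  qed
  finally show "cmod (b (contour_C c \<phi>' r) \<tau>) \<le> A' * (1 + \<bar>r\<bar>) powr (- min \<gamma> 1)"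
    unfolding Y_def \<gamma>'_def .
qed

lemma norm_exp_ray_contour_C_le:
  assumes u: "norm u = 1" "\<bar>Arg u\<bar> < \<phi>" and \<phi>: "\<phi> < \<phi>'" "\<phi>' < pi/6" and c: "0 < c"
    and s: "0 < s" "s \<le> x" and \<delta>: "0 < \<delta>" "\<delta> \<le> sin (\<phi>' - \<phi>)" "s * \<delta> \<le> 1"
    and \<theta>: "0 \<le> \<theta>" "\<theta> \<le> 1"
  shows "norm (exp (of_real s * u * contour_C c \<phi>' r))
    \<le> exp (x * c) * (s * \<delta>) powr (-\<theta>) * (1 + \<bar>r\<bar>) powr (-\<theta>)"
proof -
  have "exp (- (s * \<delta> * \<bar>r\<bar>)) \<le> (1 + s * \<delta> * \<bar>r\<bar>) powr (-\<theta>)"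
    using s \<delta> \<theta> by (intro exp_neg_le_powr) auto
  also have "\<dots> \<le> (s * \<delta> * (1 + \<bar>r\<bar>)) powr (-\<theta>)"
    using s \<delta> \<theta> mult_left_le_one_le[of "\<bar>r\<bar>" "s * \<delta>"]
    by (intro powr_mono2') (auto simp: algebra_simps add_pos_nonneg)
  also have "\<dots> = (s * \<delta>) powr (-\<theta>) * (1 + \<bar>r\<bar>) powr (-\<theta>)"
    using s \<delta> by (simp add: powr_mult)
  finally have decay: "exp (- (s * \<delta> * \<bar>r\<bar>)) \<le> (s * \<delta>) powr (-\<theta>) * (1 + \<bar>r\<bar>) powr (-\<theta>)" .
  have "s * c \<le> x * c" using s c by (intro mult_right_mono) auto
  moreover have "s * \<delta> * \<bar>r\<bar> \<le> s * sin (\<phi>' - \<phi>) * \<bar>r\<bar>"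
    using s \<delta> by (intro mult_right_mono mult_left_mono) auto
  ultimately have "s * (c - sin (\<phi>' - \<phi>) * \<bar>r\<bar>) \<le> x * c + - (s * \<delta> * \<bar>r\<bar>)"
    by (simp add: algebra_simps)
  moreover have "s * Re (u * contour_C c \<phi>' r) \<le> s * (c - sin (\<phi>' - \<phi>) * \<bar>r\<bar>)"
    using Re_mult_contour_C_le[OF u \<phi> c] s by simp
  ultimately have "norm (exp (of_real s * u * contour_C c \<phi>' r)) \<le> exp (x * c) * exp (- (s * \<delta> * \<bar>r\<bar>))"
    by (simp add: norm_exp_eq_Re mult.assoc flip: exp_add)
  also have "\<dots> \<le> exp (x * c) * ((s * \<delta>) powr (-\<theta>) * (1 + \<bar>r\<bar>) powr (-\<theta>))"
    using decay by simp
  finally show ?thesis by (simp add: mult.assoc)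
qed

lemma norm_Bfun_ray_le:
  fixes b :: "complex \<Rightarrow> real \<Rightarrow> complex"
  assumes \<rho>0: "0 < \<rho>0" and \<phi>: "0 < \<phi>" "\<phi> < \<phi>'" "\<phi>' < pi/6" and c: "\<rho>0 < c * cos \<phi>'"
    and \<gamma>: "0 < \<gamma>" and b: "\<forall>y\<in>b_domain \<rho>0. cmod y powr \<gamma> * cmod (b y \<tau>) < A"
    and u: "norm u = 1" "\<bar>Arg u\<bar> < \<phi>" and x: "0 < x"
  shows "\<exists>K \<theta>. 0 \<le> K \<and> \<theta> < 1 \<and> (\<forall>s\<in>{0<..x}. norm (Bfun c \<phi>' b (of_real s * u) \<tau>) \<le> K * s powr (-\<theta>))"
proof -
  obtain A' where A': "0 \<le> A'"
    and b_decay: "\<And>r. cmod (b (contour_C c \<phi>' r) \<tau>) \<le> A' * (1 + \<bar>r\<bar>) powr (- min \<gamma> 1)"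
    using norm_b_contour_C_le[of \<rho>0 \<phi>' c \<gamma> b \<tau> A] \<rho>0 \<phi> c \<gamma> b by auto
  have "0 < cos \<phi>'" using \<phi> by (intro cos_gt_zero_pi) auto
  with \<rho>0 c have c0: "0 < c" by (smt (verit) mult_nonpos_nonneg)
  define \<theta> where "\<theta> = 1 - min \<gamma> 1 / 2"
  have \<theta>: "0 \<le> \<theta>" "\<theta> \<le> 1" "\<theta> < 1" unfolding \<theta>_def using \<gamma> by auto
  define \<delta> where "\<delta> = min (sin (\<phi>' - \<phi>)) (1 / x)"
  have \<delta>: "0 < \<delta>" "\<delta> \<le> sin (\<phi>' - \<phi>)" "\<delta> \<le> 1 / x"
    unfolding \<delta>_def using \<phi> x by (auto intro!: sin_gt_zero)
  define h where "h r = (1 + \<bar>r\<bar>) powr (- (\<theta> + min \<gamma> 1))" for r :: real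
  have "h integrable_on UNIV"
    unfolding h_def using \<gamma> by (intro integrable_powr_decay) (simp add: \<theta>_def)
  then have h: "(h has_integral integral UNIV h) UNIV" by blast
  define E where "E = exp (x * c) * \<delta> powr (-\<theta>) * A'"
  define K where "K = E * integral UNIV h / (2 * pi)"
  have "0 \<le> integral UNIV h" using h by (rule has_integral_nonneg) (simp add: h_def)
  then have K: "0 \<le> K" unfolding K_def E_def using A' by simp
  have "norm (Bfun c \<phi>' b (of_real s * u) \<tau>) \<le> K * s powr (-\<theta>)" if s: "0 < s" "s \<le> x" for s
  proof -
    have s\<delta>: "s * \<delta> \<le> 1" using s \<delta> x mult_mono[of s x \<delta> "1/x"] by simp
    define G where "G r = exp (of_real s * u * contour_C c \<phi>' r) * b (contour_C c \<phi>' r) \<tau>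
      * (\<i> * exp (\<i> * of_real (\<phi>' * sgn r)))" for r
    have "norm (G r) \<le> (E * s powr (-\<theta>)) * h r" for r
    proof -
      have "norm (G r) = norm (exp (of_real s * u * contour_C c \<phi>' r)) * cmod (b (contour_C c \<phi>' r) \<tau>)"
        unfolding G_def by (simp add: norm_mult norm_exp_eq_Re)
      also have "\<dots> \<le> (exp (x * c) * (s * \<delta>) powr (-\<theta>) * (1 + \<bar>r\<bar>) powr (-\<theta>))
          * (A' * (1 + \<bar>r\<bar>) powr (- min \<gamma> 1))"
        using norm_exp_ray_contour_C_le[OF u \<phi>(2,3) c0 s \<delta>(1,2) s\<delta> \<theta>(1,2)] b_decay
        by (intro mult_mono) auto
      also have "\<dots> = (E * s powr (-\<theta>)) * h r"
        unfolding E_def h_def using s \<delta> by (simp add: powr_mult powr_add[symmetric] ac_simps)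
      finally show ?thesis .
    qed
    then have "norm (integral UNIV G) \<le> E * s powr (-\<theta>) * integral UNIV h"
      by (intro norm_integral_le_of_has_integral[OF has_integral_mult_right[OF h]])
    moreover have "Bfun c \<phi>' b (of_real s * u) \<tau> = integral UNIV G / (2 * of_real pi * \<i>)"
      unfolding Bfun_def G_def by (simp add: mult.assoc)
    ultimately show ?thesis
      unfolding K_def by (simp add: norm_divide norm_mult divide_right_mono mult_ac)
  qed
  with K \<theta>(3) show ?thesis by (intro exI[of _ K] exI[of _ \<theta>]) auto
qed

section \<open>The first convolution factor\<close>

lemma has_integral_reflect_scale:
  fixes f :: "real \<Rightarrow> 'b::real_normed_vector"
  assumes f: "(f has_integral I) {0..L}" and L: "0 < L" and k: "0 < k"
  shows "((\<lambda>t. f (L - k * t)) has_integral I /\<^sub>R k) {0..L/k}"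
proof -
  have "(f has_integral I) (cbox 0 L)" using f by simp
  from has_integral_affinity[OF this, of "-k" L] k
  have "((\<lambda>x. f ((-k) *\<^sub>R x + L)) has_integral (1 / \<bar>-k\<bar>) *\<^sub>R I)
      ((\<lambda>x. (1 / (-k)) *\<^sub>R x + -((1 / (-k)) *\<^sub>R L)) ` cbox 0 L)" by simp
  moreover have "(\<lambda>x. (1 / (-k)) *\<^sub>R x + -((1 / (-k)) *\<^sub>R L)) = (\<lambda>x. (-1/k) * x + L/k)"
    by (auto simp: fun_eq_iff field_simps)
  moreover have "(\<lambda>x. (-1/k) * x + L/k) ` {0..L} = {0..L/k}"
    using k L by (subst image_affinity_atLeastAtMost) (auto simp: field_simps)
  ultimately show ?thesis using k by (simp add: divide_inverse_commute)
qed

lemma abs_conv_nonneg: "0 \<le> abs_conv B F q \<tau>"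
  unfolding abs_conv_def
  by (cases "(\<lambda>s. cmod (B (of_real s * sgn q) \<tau>) * cmod (F (q - of_real s * sgn q) \<tau>)) integrable_on {0..cmod q}")
     (auto intro: integral_nonneg simp: not_integrable_integral)

lemma abs_conv_ray_eq:
  assumes u: "norm u = 1" and x: "0 < x"
    and H: "((\<lambda>t. x * (cmod (B (of_real ((1-t)*x) * u) \<tau>) * cmod (F (of_real (t*x) * u) \<tau>))) has_integral I) {0..1}"
  shows "abs_conv B F (of_real x * u) \<tau> = I"
proof -
  have "cmod (of_real x * u) = x" using u x by (simp add: norm_mult)
  moreover from this have "sgn (of_real x * u) = u"
    using x by (simp add: sgn_div_norm scaleR_conv_of_real)
  moreover have "((\<lambda>s. cmod (B (of_real s * u) \<tau>) * cmod (F (of_real x * u - of_real s * u) \<tau>))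
      has_integral I) {0..x}"
  proof -
    have "((\<lambda>s. x * (cmod (B (of_real s * u) \<tau>) * cmod (F (of_real x * u - of_real s * u) \<tau>)))
        has_integral x * I) {0..x}"
      using has_integral_reflect_scale[OF H, of "1/x"] x by (simp add: algebra_simps)
    from has_integral_mult_right[OF this, of "1/x"] x show ?thesis by simp
  qed
  ultimately show ?thesis unfolding abs_conv_def by (simp add: integral_unique)
qed

lemma integrable_on_if_norm_eq_power_mult:
  fixes f :: "real \<Rightarrow> complex" and H g :: "real \<Rightarrow> real"
  assumes f: "f integrable_on {0..1}" and g: "g integrable_on {0..1}"
    and fH: "\<And>t. t \<in> {0<..<1} \<Longrightarrow> norm (f t) = t^j * H t"
    and Hg: "\<And>t. t \<in> {0<..<1} \<Longrightarrow> \<bar>H t\<bar> \<le> g t"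
  shows "H integrable_on {0..1}"
proof -
  have neg: "negligible ({0..1} - {0<..<1::real})"
    by (rule negligible_finite, rule finite_subset[of _ "{0, 1}"]) auto
  have meas: "(\<lambda>t. norm (f t) / t^j) \<in> borel_measurable (lebesgue_on {0<..<1})"
  proof -
    have "f \<in> borel_measurable (lebesgue_on {0<..<1})"
      by (rule measurable_restrict_mono[OF integrable_imp_measurable[OF f]]) auto
    moreover have "(\<lambda>t::real. t) \<in> borel_measurable (lebesgue_on {0<..<1})"
      by (intro measurable_restrict_space1 measurable_completion) simp
    ultimately show ?thesis
      by (intro borel_measurable_divide borel_measurable_power measurable_compose[OF _ borel_measurable_norm])
  qed
  have g': "g integrable_on {0<..<1}"
    by (rule integrable_spike_set[OF g negligible_subset[OF neg] negligible_subset[OF neg]]) auto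
  have bound: "norm (norm (f t) / t^j) \<le> g t" if "t \<in> {0<..<1}" for t
    using fH[OF that] Hg[OF that] that by simp
  have "{0<..<1::real} \<in> sets lebesgue" by simp
  with meas g' bound have "(\<lambda>t. norm (f t) / t^j) integrable_on {0<..<1}"
    by (rule measurable_bounded_by_integrable_imp_integrable)
  then have "H integrable_on {0<..<1}"
    by (rule integrable_eq) (use fH in auto)
  then show ?thesis
    by (rule integrable_spike_set[OF _ negligible_subset[OF neg] negligible_subset[OF neg]]) auto
qed

lemma integrable_powr_reflected:
  fixes x \<theta> :: real
  assumes x: "0 < x" and \<theta>: "\<theta> < 1"
  shows "(\<lambda>t. ((1 - t) * x) powr (-\<theta>)) integrable_on {0..1}"
proof -
  obtain J where "((\<lambda>s. s powr (-\<theta>)) has_integral J) {0..x}"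
    using integrable_on_powr_from_0[of "-\<theta>" x] \<theta> x by auto
  from has_integral_reflect_scale[OF this x x] x show ?thesis
    by (auto simp: integrable_on_def algebra_simps)
qed

lemma norm_conv_integrand_ray:
  assumes u: "norm u = 1" and x: "0 \<le> x" and t: "0 \<le> t"
  defines "q \<equiv> of_real x * u"
  shows "norm ((of_real t * q)^j * F (of_real t * q) \<tau> * B (q - of_real t * q) \<tau> * q)
    = (t*x)^j * (x * (cmod (B (of_real ((1-t)*x) * u) \<tau>) * cmod (F (of_real (t*x) * u) \<tau>)))"
proof -
  have e: "of_real t * q = of_real (t*x) * u" "q - of_real t * q = of_real ((1-t)*x) * u"
    unfolding q_def by (simp_all add: algebra_simps)
  have "norm q = x" unfolding q_def using x u by (simp add: norm_mult)
  then show ?thesis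
    unfolding e(2) unfolding e(1) using t x u by (simp add: norm_mult norm_power)
qed

lemma norm_conv_power_le_abs_conv:
  fixes F B :: "complex \<Rightarrow> real \<Rightarrow> complex"
  assumes u: "norm u = 1" and x: "0 < x" and \<theta>: "\<theta> < 1" and K: "0 \<le> K"
    and B: "\<And>s. s \<in> {0<..x} \<Longrightarrow> norm (B (of_real s * u) \<tau>) \<le> K * s powr (-\<theta>)"
    and F: "\<And>y. y \<in> {0..x} \<Longrightarrow> norm (F (of_real y * u) \<tau>) \<le> M"
  shows "norm (conv (\<lambda>q s. q^j * F q s) B (of_real x * u) \<tau>) \<le> x^j * abs_conv B F (of_real x * u) \<tau>"
proof -
  define q where "q = of_real x * u"
  define f where "f t = (of_real t * q)^j * F (of_real t * q) \<tau> * B (q - of_real t * q) \<tau> * q" for t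
  define H where "H t = x * (cmod (B (of_real ((1-t)*x) * u) \<tau>) * cmod (F (of_real (t*x) * u) \<tau>))" for t
  have conv_f: "conv (\<lambda>q s. q^j * F q s) B q \<tau> = integral {0..1} f"
    unfolding conv_eq_integral f_def by (simp add: mult.assoc)
  have H0: "0 \<le> H t" for t unfolding H_def using x by simp
  have nf: "norm (f t) = t^j * (x^j * H t)" if "0 \<le> t" for t
    using norm_conv_integrand_ray[OF u less_imp_le[OF x] that, of j F \<tau> B]
    unfolding f_def H_def q_def by (simp add: power_mult_distrib ac_simps)
  \<comment> \<open>A non-integrable \<open>f\<close> has integral 0. Otherwise \<open>f\<close> is measurable, hence so is
    \<open>H = |f| / (t x)^j\<close>, which is dominated by the integrable singularity of \<open>B\<close>.\<close>
  show ?thesis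
  proof (cases "f integrable_on {0..1}")
    case False
    then show ?thesis
      unfolding q_def[symmetric] conv_f using abs_conv_nonneg[of B F q \<tau>] x
      by (simp add: not_integrable_integral)
  next
    case True
    have "norm (F (of_real 0 * u) \<tau>) \<le> M" using F[of 0] x by simp
    then have "0 \<le> M" by (rule order_trans[OF norm_ge_zero])
    have bound: "\<bar>x^j * H t\<bar> \<le> x^j * (x * (K * ((1-t)*x) powr (-\<theta>) * M))"
      if t: "t \<in> {0<..<1}" for t
    proof -
      have "norm (B (of_real ((1-t)*x) * u) \<tau>) \<le> K * ((1-t)*x) powr (-\<theta>)"
        using t x by (intro B) (auto simp: mult_le_cancel_right1)
      moreover have "norm (F (of_real (t*x) * u) \<tau>) \<le> M"
        using t x by (intro F) (auto simp: mult_le_cancel_right1)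
      ultimately have "H t \<le> x * (K * ((1-t)*x) powr (-\<theta>) * M)"
        unfolding H_def using x K \<open>0 \<le> M\<close> by (intro mult_left_mono mult_mono) auto
      then show ?thesis using H0[of t] x by (simp add: mult_left_mono)
    qed
    have "(\<lambda>t. (x^j * x * K * M) *\<^sub>R ((1-t)*x) powr (-\<theta>)) integrable_on {0..1}"
      by (rule integrable_cmul[OF integrable_powr_reflected[OF x \<theta>]])
    then have "(\<lambda>t. x^j * (x * (K * ((1-t)*x) powr (-\<theta>) * M))) integrable_on {0..1}"
      by (simp add: ac_simps)
    then have "(\<lambda>t. x^j * H t) integrable_on {0..1}"
      by (rule integrable_on_if_norm_eq_power_mult[OF True _, where j = j]) (use nf bound in auto)
    then have "H integrable_on {0..1}" using x by simp
    then obtain I where I: "(H has_integral I) {0..1}" unfolding integrable_on_def by blast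
    have "norm (integral {0..1} f) \<le> x^j * I"
    proof (rule norm_integral_le_of_has_integral[OF has_integral_mult_right[OF I]])
      fix t :: real assume t: "t \<in> {0..1}"
      have "t^j \<le> 1" using t by (simp add: power_le_one)
      then show "norm (f t) \<le> x^j * H t"
        using nf[of t] t x H0[of t] by (simp add: mult_left_le_one_le)
    qed
    moreover have "abs_conv B F q \<tau> = I"
      unfolding q_def by (rule abs_conv_ray_eq[where B = B and F = F, OF u x I[unfolded H_def[abs_def]]])
    ultimately show ?thesis unfolding q_def[symmetric] conv_f by simp
  qed
qed

lemma zero_in_closure_sector:
  assumes "0 < \<phi>"
  shows "0 \<in> closure (sector \<phi>)"
proof -
  have "complex_of_real (e/2) \<in> sector \<phi> \<and> dist (complex_of_real (e/2)) 0 < e" if "0 < e" for e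
  proof -
    have "Arg (complex_of_real (e/2)) = 0" by (subst Arg_of_real) (use that in simp)
    then show ?thesis using that assms unfolding sector_def by simp
  qed
  then show ?thesis unfolding closure_approachable by blast
qed

lemma Arg_sgn: "Arg (sgn p) = Arg p"
proof (cases "p = 0")
  case False
  then have "sgn p = of_real (1 / cmod p) * p"
    by (simp add: sgn_div_norm scaleR_conv_of_real divide_inverse mult.commute)
  with False show ?thesis by simp
qed simp

lemma ray_in_closure_sector:
  assumes p: "p \<in> sector \<phi>" and \<phi>: "0 < \<phi>" and y: "0 \<le> y"
  shows "of_real y * sgn p \<in> closure (sector \<phi>)"
proof (cases "y = 0")
  case True
  then show ?thesis using zero_in_closure_sector[OF \<phi>] by simp
next
  case False
  with y p have "of_real y * sgn p \<in> sector \<phi>"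
    unfolding sector_def by (simp add: Arg_sgn sgn_zero_iff)
  then show ?thesis using closure_subset by blast
qed

lemma nu_norm_finiteE:
  assumes \<phi>: "0 < \<phi>" and T: "0 \<le> T" and fin: "nu_norm \<phi> T \<nu> G < \<infinity>"
  obtains S where "0 \<le> S" "nu_norm \<phi> T \<nu> G = ereal (M0 * S)"
    "\<And>z \<tau>. z \<in> closure (sector \<phi>) \<Longrightarrow> \<tau> \<in> {0..T} \<Longrightarrow> norm (G z \<tau>) \<le> S * exp_weight \<nu> (cmod z)"
proof -
  define Sup where "Sup = (SUP z\<in>closure (sector \<phi>) \<times> {0..T}.
    ereal ((1 + (cmod (fst z))^2) * exp (- \<nu> * cmod (fst z)) * norm (G (fst z) (snd z))))"
  have nu: "nu_norm \<phi> T \<nu> G = ereal M0 * Sup" unfolding nu_norm_def Sup_def ..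
  have "(0, 0) \<in> closure (sector \<phi>) \<times> {0..T}" using zero_in_closure_sector[OF \<phi>] T by simp
  then have "0 \<le> Sup" unfolding Sup_def by (rule SUP_upper2) simp
  moreover have "Sup \<noteq> \<infinity>" using fin M0_pos unfolding nu by auto
  ultimately obtain S where S: "Sup = ereal S" "0 \<le> S" by (cases Sup) auto
  show thesis
  proof
    show "0 \<le> S" "nu_norm \<phi> T \<nu> G = ereal (M0 * S)" using S nu by simp_all
    fix z \<tau> assume "z \<in> closure (sector \<phi>)" "\<tau> \<in> {0..T}"
    then have "ereal ((1 + (cmod z)^2) * exp (- \<nu> * cmod z) * norm (G z \<tau>)) \<le> Sup"
      unfolding Sup_def by (intro SUP_upper2[of "(z, \<tau>)"]) auto
    then show "norm (G z \<tau>) \<le> S * exp_weight \<nu> (cmod z)"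
      unfolding le_exp_weight_iff S by simp
  qed
qed

lemma norm_conv_pow_le_exp_weight:
  fixes B F :: "complex \<Rightarrow> real \<Rightarrow> complex"
  assumes \<phi>: "0 < \<phi>" and p: "p \<in> sector \<phi>" and \<nu>: "0 \<le> \<nu>" and SA: "0 \<le> SA" and SF: "0 \<le> SF"
    and F: "\<And>z. z \<in> closure (sector \<phi>) \<Longrightarrow> norm (F z \<tau>) \<le> SF * exp_weight \<nu> (cmod z)"
    and AC: "\<And>z. z \<in> closure (sector \<phi>) \<Longrightarrow> norm (abs_conv B F z \<tau>) \<le> SA * exp_weight \<nu> (cmod z)"
    and B: "\<And>x. 0 < x \<Longrightarrow>
      \<exists>K \<theta>. 0 \<le> K \<and> \<theta> < 1 \<and> (\<forall>s\<in>{0<..x}. norm (B (of_real s * sgn p) \<tau>) \<le> K * s powr (-\<theta>))"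
  shows "norm (conv_pow (conv (\<lambda>q s. q^j * F q s) B) F k p \<tau>)
    \<le> SA * (SF * M0)^k * cmod p ^ j * exp_weight \<nu> (cmod p)"
proof -
  define u where "u = sgn p"
  have "p \<noteq> 0" using p unfolding sector_def by simp
  then have u: "norm u = 1" and pu: "p = of_real (cmod p) * u"
    unfolding u_def by (simp_all add: norm_sgn) (simp add: sgn_div_norm scaleR_conv_of_real)
  have ray: "of_real y * u \<in> closure (sector \<phi>)" "cmod (of_real y * u) = y" if "0 \<le> y" for y
    unfolding u_def using ray_in_closure_sector[OF p \<phi> that] that u[unfolded u_def]
    by (simp_all add: norm_mult)
  have hF: "norm (F (of_real y * u) \<tau>) \<le> SF * exp_weight \<nu> y" if "0 \<le> y" for y
    using F[OF ray(1)[OF that]] ray(2)[OF that] by simp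
  have hX: "norm (conv (\<lambda>q s. q^j * F q s) B (of_real y * u) \<tau>) \<le> SA * y^j * exp_weight \<nu> y"
    if "0 \<le> y" for y
  proof (cases "y = 0")
    case True
    then show ?thesis using SA exp_weight_pos[of \<nu> 0] by (simp add: conv_eq_integral)
  next
    case False
    with that have y: "0 < y" by simp
    obtain K \<theta> where K: "0 \<le> K" "\<theta> < 1"
      and KB: "\<forall>s\<in>{0<..y}. norm (B (of_real s * u) \<tau>) \<le> K * s powr (-\<theta>)"
      using B[OF y] unfolding u_def by blast
    have "norm (F (of_real y' * u) \<tau>) \<le> SF * exp (\<nu> * y)" if "y' \<in> {0..y}" for y'
      using hF[of y'] mult_left_mono[OF exp_weight_le_exp[OF \<nu>] SF, of y' y] that by auto
    then have "norm (conv (\<lambda>q s. q^j * F q s) B (of_real y * u) \<tau>) \<le> y^j * abs_conv B F (of_real y * u) \<tau>"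
      using KB by (intro norm_conv_power_le_abs_conv[OF u y K(2,1)]) auto
    also have "\<dots> \<le> y^j * (SA * exp_weight \<nu> y)"
      using AC[OF ray(1)] ray(2) y by (intro mult_left_mono) (auto intro: order_trans[OF abs_ge_self])
    finally show ?thesis by (simp add: ac_simps)
  qed
  have "norm (conv_pow (conv (\<lambda>q s. q^j * F q s) B) F k (of_real (cmod p) * u) \<tau>)
      \<le> SA * (SF * M0)^k * cmod p ^ j * exp_weight \<nu> (cmod p)"
    using hX hF by (intro norm_conv_pow_ray_le[OF u SA SF]) auto
  then show ?thesis using pu by simp
qed

lemma conv_pow_Suc_eq_0_if_vanishes:
  assumes p: "p \<in> sector \<phi>" and \<phi>: "0 < \<phi>" and F: "\<And>z. z \<in> closure (sector \<phi>) \<Longrightarrow> F z \<tau> = 0"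
  shows "conv_pow X F (Suc k) p \<tau> = 0"
proof -
  have "F (of_real s * p) \<tau> = 0" if "s \<in> {0..1}" for s
  proof -
    have "p \<noteq> 0" using p unfolding sector_def by simp
    then have "of_real s * p = of_real (s * cmod p) * sgn p"
      by (simp add: sgn_div_norm scaleR_conv_of_real)
    also have "\<dots> \<in> closure (sector \<phi>)"
      using that by (intro ray_in_closure_sector[OF p \<phi>]) auto
    finally show ?thesis by (rule F)
  qed
  then show ?thesis unfolding conv_pow.simps(2) by (rule conv_eq_0_if_vanishes[where F = F])
qed

lemma norm_Duhamel_conv_pow_le:
  fixes B F :: "complex \<Rightarrow> real \<Rightarrow> complex"
  assumes \<phi>: "0 < \<phi>" "\<phi> < pi/6" and p: "p \<in> sector \<phi>" and t: "t \<in> {0..T}"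
    and j: "j \<le> 3" and \<nu>: "0 \<le> \<nu>" and SA: "0 \<le> SA" and SF: "0 \<le> SF"
    and F: "\<And>z \<tau>. z \<in> closure (sector \<phi>) \<Longrightarrow> \<tau> \<in> {0..T} \<Longrightarrow>
      norm (F z \<tau>) \<le> SF * exp_weight \<nu> (cmod z)"
    and AC: "\<And>z \<tau>. z \<in> closure (sector \<phi>) \<Longrightarrow> \<tau> \<in> {0..T} \<Longrightarrow>
      norm (abs_conv B F z \<tau>) \<le> SA * exp_weight \<nu> (cmod z)"
    and B: "\<And>\<tau> x. \<tau> \<in> {0..T} \<Longrightarrow> 0 < x \<Longrightarrow>
      \<exists>K \<theta>. 0 \<le> K \<and> \<theta> < 1 \<and> (\<forall>s\<in>{0<..x}. norm (B (of_real s * sgn p) \<tau>) \<le> K * s powr (-\<theta>))"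
  shows "cmod (integral {0..t} (\<lambda>\<tau>.
        conv_pow (conv (\<lambda>q s. q ^ j * F q s) B) F k p \<tau> * exp (- (p ^ 3) * of_real (t - \<tau>))))
    \<le> SA * (SF * M0)^k * exp_weight \<nu> (cmod p) / cos (3*\<phi>) * T powr ((3 - real j) / 3)"
proof (rule norm_Duhamel_integral_le[OF p \<phi>(2) t j])
  show "0 \<le> SA * (SF * M0)^k * exp_weight \<nu> (cmod p)"
    using SA SF M0_pos exp_weight_pos[of \<nu> "cmod p"] by simp
  fix \<tau> assume "\<tau> \<in> {0..t}"
  with t have \<tau>: "\<tau> \<in> {0..T}" by simp
  have "norm (conv_pow (conv (\<lambda>q s. q ^ j * F q s) B) F k p \<tau>)
      \<le> SA * (SF * M0)^k * cmod p ^ j * exp_weight \<nu> (cmod p)"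
    by (rule norm_conv_pow_le_exp_weight[OF \<phi>(1) p \<nu> SA SF]) (use F AC B \<tau> in auto)
  then show "norm (conv_pow (conv (\<lambda>q s. q ^ j * F q s) B) F k p \<tau>)
      \<le> SA * (SF * M0)^k * exp_weight \<nu> (cmod p) * cmod p ^ j"
    by (simp add: ac_simps)
qed

lemma Duhamel_conv_pow_le_nu_norms:
  fixes B F :: "complex \<Rightarrow> real \<Rightarrow> complex"
  assumes \<phi>: "0 < \<phi>" "\<phi> < pi/6" and T: "0 < T" and p: "p \<in> sector \<phi>" and t: "t \<in> {0..T}"
    and j: "j \<le> 3" and \<nu>: "0 \<le> \<nu>" and F: "nu_norm \<phi> T \<nu> F < \<infinity>"
    and B: "\<And>\<tau> x. \<tau> \<in> {0..T} \<Longrightarrow> 0 < x \<Longrightarrow>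
      \<exists>K \<theta>. 0 \<le> K \<and> \<theta> < 1 \<and> (\<forall>s\<in>{0<..x}. norm (B (of_real s * sgn p) \<tau>) \<le> K * s powr (-\<theta>))"
  shows "ereal (cmod (integral {0..t} (\<lambda>\<tau>.
        conv_pow (conv (\<lambda>q s. q ^ j * F q s) B) F k p \<tau> * exp (- (p ^ 3) * of_real (t - \<tau>)))))
    \<le> ereal (1 / cos (3*\<phi>) / (M0 * (1 + (cmod p)^2)))
       * nu_norm \<phi> T \<nu> (abs_conv B F) * nu_norm \<phi> T \<nu> F ^ k
       * ereal (exp (\<nu> * cmod p) * T powr ((3 - real j) / 3))"
    (is "ereal ?lhs \<le> ereal ?c * ?NA * ?NF ^ k * ereal ?e")
proof -
  have \<kappa>: "0 < cos (3*\<phi>)" using \<phi> by (intro cos_gt_zero_pi) auto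
  have c: "0 < ?c" using \<kappa> M0_pos by (simp add: add_pos_nonneg)
  have e: "0 < ?e" using T by simp
  obtain SF where SF: "0 \<le> SF" "?NF = ereal (M0 * SF)"
    and F_le: "\<And>z \<tau>. z \<in> closure (sector \<phi>) \<Longrightarrow> \<tau> \<in> {0..T} \<Longrightarrow>
      norm (F z \<tau>) \<le> SF * exp_weight \<nu> (cmod z)"
    using nu_norm_finiteE[OF \<phi>(1) _ F] T by auto
  show ?thesis
  proof (cases "?NA < \<infinity>")
    case True
    obtain SA where SA: "0 \<le> SA" "?NA = ereal (M0 * SA)"
      and AC_le: "\<And>z \<tau>. z \<in> closure (sector \<phi>) \<Longrightarrow> \<tau> \<in> {0..T} \<Longrightarrow>
        norm (abs_conv B F z \<tau>) \<le> SA * exp_weight \<nu> (cmod z)"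
      using nu_norm_finiteE[OF \<phi>(1) _ True] T by auto
    have "?lhs \<le> SA * (SF * M0)^k * exp_weight \<nu> (cmod p) / cos (3*\<phi>) * T powr ((3 - real j) / 3)"
      by (rule norm_Duhamel_conv_pow_le[OF \<phi> p t j \<nu> SA(1) SF(1) F_le AC_le B])
    also have "\<dots> = ?c * (M0 * SA) * (M0 * SF)^k * ?e"
    proof -
      have "SA * (SF * M0)^k * (E / D) / \<kappa> * P = 1 / \<kappa> / (M0 * D) * (M0 * SA) * (M0 * SF)^k * (E * P)"
        if "0 < D" "0 < \<kappa>" for D \<kappa> E P :: real
        using that M0_pos by (simp add: field_simps power_mult_distrib)
      from this[OF _ \<kappa>] show ?thesis
        unfolding exp_weight_def by (simp add: add_pos_nonneg)
    qed
    finally show ?thesis unfolding SA(2) SF(2) by simp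
  next
    case False
    then have NA: "?NA = \<infinity>" by simp
    show ?thesis
    proof (cases "k = 0 \<or> 0 < SF")
      case True
      then have "0 < ereal (M0 * SF) ^ k" using M0_pos by (auto simp: zero_less_power)
      moreover have "ereal x * \<infinity> * y * ereal z = \<infinity>" if "0 < x" "0 < y" "0 < z" for x z y
        using that by simp
      ultimately have RHS: "ereal ?c * ?NA * ?NF ^ k * ereal ?e = \<infinity>"
        unfolding NA SF(2) using c e by blast
      show ?thesis by (subst RHS) simp
    next
      case False
      \<comment> \<open>Here the right-hand side is \<open>\<infinity> * 0 = 0\<close>, but \<open>F\<close> vanishes on the sector.\<close>
      then obtain k' where k': "k = Suc k'" and "SF = 0" using SF(1) by (cases k) auto
      have X0: "conv_pow (conv (\<lambda>q s. q ^ j * F q s) B) F k p \<tau> = 0" if "\<tau> \<in> {0..t}" for \<tau>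
        unfolding k' using F_le[of _ \<tau>] \<open>SF = 0\<close> that t
        by (intro conv_pow_Suc_eq_0_if_vanishes[OF p \<phi>(1)]) auto
      have "integral {0..t} (\<lambda>\<tau>. conv_pow (conv (\<lambda>q s. q ^ j * F q s) B) F k p \<tau>
          * exp (- (p ^ 3) * of_real (t - \<tau>))) = integral {0..t} (\<lambda>_::real. 0)"
        by (rule Henstock_Kurzweil_Integration.integral_cong) (simp add: X0)
      then have LHS: "?lhs = 0" by simp
      have RHS: "ereal ?c * ?NA * ?NF ^ k * ereal ?e = 0"
        unfolding NA SF(2) \<open>SF = 0\<close> k' by simp
      show ?thesis by (subst LHS, subst RHS) simp
    qed
  qed
qed

theorem lemma13:
  fixes \<phi> :: real
  assumes "0 < \<phi>" and "\<phi> < pi / 6"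
  shows "\<exists>C::real. \<forall>(T::real) (\<rho>0::real) (\<phi>'::real) (c::real) (\<alpha>::real) (\<beta>::real) (A::real)
      (b :: complex \<Rightarrow> real \<Rightarrow> complex) (F :: complex \<Rightarrow> real \<Rightarrow> complex)
      (j::nat) (k::nat) (\<nu>::real) (p::complex) (t::real).
    0 < T \<longrightarrow> 0 < \<rho>0 \<longrightarrow> \<phi> < \<phi>' \<longrightarrow> \<phi>' < pi / 6 \<longrightarrow> \<rho>0 < c * cos \<phi>' \<longrightarrow>
    0 < \<alpha> \<longrightarrow> 0 < \<beta> \<longrightarrow>
    (\<forall>\<tau>\<in>{0..T}. (\<lambda>y. b y \<tau>) holomorphic_on b_domain \<rho>0) \<longrightarrow>
    (\<forall>\<tau>\<in>{0..T}. \<forall>y\<in>b_domain \<rho>0. cmod y powr (\<alpha> + real k * \<beta>) * cmod (b y \<tau>) < A) \<longrightarrow>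
    j \<le> 3 \<longrightarrow> 2 * \<rho>0 + 1 < \<nu> \<longrightarrow> in_A \<phi> T \<nu> F \<longrightarrow>
    p \<in> sector \<phi> \<longrightarrow> t \<in> {0..T} \<longrightarrow>
    ereal (cmod (integral {0..t} (\<lambda>\<tau>.
        conv_pow (conv (\<lambda>q s. q ^ j * F q s) (Bfun c \<phi>' b)) F k p \<tau>
        * exp (- (p ^ 3) * of_real (t - \<tau>)))))
    \<le> ereal (C / (M0 * (1 + (cmod p)^2)))
       * nu_norm \<phi> T \<nu> (abs_conv (Bfun c \<phi>' b) F)
       * nu_norm \<phi> T \<nu> F ^ k
       * ereal (exp (\<nu> * cmod p) * T powr ((3 - real j) / 3))"
proof (intro exI[of _ "1 / cos (3*\<phi>)"] allI impI, goal_cases)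
  case (1 T \<rho>0 \<phi>' c \<alpha> \<beta> A b F j k \<nu> p t)
  then have u: "norm (sgn p) = 1" "\<bar>Arg (sgn p)\<bar> < \<phi>"
    by (auto simp: sector_def norm_sgn Arg_sgn)
  have B: "\<exists>K \<theta>. 0 \<le> K \<and> \<theta> < 1 \<and>
      (\<forall>s\<in>{0<..x}. norm (Bfun c \<phi>' b (of_real s * sgn p) \<tau>) \<le> K * s powr (-\<theta>))"
    if "\<tau> \<in> {0..T}" "0 < x" for \<tau> x
    using 1 that assms(1)
    by (intro norm_Bfun_ray_le[where \<gamma> = "\<alpha> + real k * \<beta>" and A = A, OF _ _ _ _ _ _ _ u])
       (auto simp: add_pos_nonneg)
  show ?case
    by (rule Duhamel_conv_pow_le_nu_norms[OF assms _ _ _ _ _ _ B]) (use 1 in \<open>auto simp: in_A_def\<close>)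
qed

end
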